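(* Let $\pi^m_{k+1}(\cdot|s,\mathbf{a}^{1:m-1})\propto\exp\{\beta_k^{-1}Q^{1:m}_{\boldsymbol{\pi}_{\theta_k}}(s,\mathbf{a}^{1:m-1},\cdot)+\phi^\top(s,\mathbf{a}^{1:m-1},\cdot)\theta_k^m\}$ be the ideal update, $\pi_{\theta^m_{k+1}}$ the log-linear policy with parameter $\theta^m_{k+1}$, and $\pi_{\theta^m_k}$ the current log-linear policy. Then for any $(s,\mathbf{a}^{1:m-1})\in\mathcal{S}\times\mathcal{A}^{m-1}$ (suppressed from notation below), $$ \begin{aligned} &\mathrm{KL}(\pi_*^m\|\pi_{\theta^m_{k+1}})-\mathrm{KL}(\pi_*^m\|\pi_{\theta^m_k})\\ &\le\Big\langle\log\frac{\pi_{\theta^m_{k+1}}}{\pi^m_{k+1}},\ \pi_{\theta^m_k}-\pi_*^m\Big\rangle+\frac{1}{\beta_k}\big\langle A^m_{\boldsymbol{\pi}_{\theta_k}}(s,\mathbf{a}^{1:m-1},\cdot),\ \pi_{\theta^m_k}-\pi_*^m\big\rangle-\frac12\big\|\pi_{\theta^m_{k+1}}-\pi_{\theta^m_k}\big\|_1^2\\ &\quad-\big\langle(\theta^m_{k+1}-\theta^m_k)^\top\phi(s,\mathbf{a}^{1:m-1},\cdot),\ \pi_{\theta^m_k}-\pi_{\theta^m_{k+1}}\big\rangle. \end{aligned} $$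
   Context: Fully cooperative Markov game with agents $\{1,\dots,N\}$, finite state space $\mathcal{S}$, finite individual action space $\mathcal{A}$. Joint policies in sequential conditional form $\boldsymbol{\pi}(\mathbf{a}|s)=\prod_m\pi^m(a^m|s,\mathbf{a}^{1:m-1})$. $Q^{1:m}_{\boldsymbol{\pi}}(s,\mathbf{a}^{1:m})$ is the expected joint action-value given $\mathbf{a}^{1:m}$ when the remaining agents follow $\boldsymbol{\pi}$, and the multi-agent advantage of agent $m$ is $A^m_{\boldsymbol{\pi}}(s,\mathbf{a}^{1:m-1},a^m)=Q^{1:m}_{\boldsymbol{\pi}}(s,\mathbf{a}^{1:m})-Q^{1:m-1}_{\boldsymbol{\pi}}(s,\mathbf{a}^{1:m-1})$. Log-linear policies $\pi_{\theta^m}(a^m|s,\mathbf{a}^{1:m-1})\propto\exp(\phi^\top(s,\mathbf{a}^{1:m-1},a^m)\theta^m)$. $\boldsymbol{\pi}_{\theta_k}$ is the current joint policy with parameters $\theta_k^1,\dots,\theta_k^N$; $\theta^m_{k+1}\in\mathbb{R}^d$ arbitrary; $\beta_k>0$; $\pi_*^m$ is agent $m$'s conditional policy in an optimal joint policy $\boldsymbol{\pi}_*$. $\langle\cdot,\cdot\rangle$ is the inner product over $\mathcal{A}$ and $\mathrm{KL}$ the Kullback–Leibler divergence. *)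

theory Defs
  imports "HOL-Analysis.Analysis"
begin

text \<open>Joint actions are lists of length N; the action of
agent j is at list position j-1.\<close>

record ('s, 'a) mgame =
  trans :: "'s \<Rightarrow> 'a list \<Rightarrow> 's \<Rightarrow> real"
  rew   :: "'s \<Rightarrow> 'a list \<Rightarrow> real"
  disc  :: real

definition valid_game :: "nat \<Rightarrow> ('s::finite, 'a::finite) mgame \<Rightarrow> bool" where
  "valid_game N G \<longleftrightarrow> 0 \<le> disc G \<and> disc G < 1 \<and>
     (\<forall>s as s'. 0 \<le> trans G s as s') \<and>
     (\<forall>s as. length as = N \<longrightarrow> (\<Sum>s'\<in>UNIV. trans G s as s') = 1)"

text \<open>A joint policy in sequential conditional form: pol j s pre a = pi^j(a | s, a^{1:j-1}),
where pre = a^{1:j-1} is a list of length j-1.\<close>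
type_synonym ('s, 'a) jpolicy = "nat \<Rightarrow> 's \<Rightarrow> 'a list \<Rightarrow> 'a \<Rightarrow> real"

definition is_dist :: "('a::finite \<Rightarrow> real) \<Rightarrow> bool" where
  "is_dist p \<longleftrightarrow> (\<forall>a. 0 \<le> p a) \<and> (\<Sum>a\<in>UNIV. p a) = 1"

definition is_jpolicy :: "nat \<Rightarrow> ('s, 'a::finite) jpolicy \<Rightarrow> bool" where
  "is_jpolicy N pol \<longleftrightarrow> (\<forall>j s pre. 1 \<le> j \<and> j \<le> N \<and> length pre = j - 1 \<longrightarrow> is_dist (pol j s pre))"

text \<open>Probability of agents k+1..N choosing the continuation making up the full joint action as
(given the first k actions take k as).\<close>
definition cond_prob :: "nat \<Rightarrow> ('s, 'a) jpolicy \<Rightarrow> nat \<Rightarrow> 's \<Rightarrow> 'a list \<Rightarrow> real" where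
  "cond_prob N pol k s as = (\<Prod>j\<in>{k+1..N}. pol j s (take (j - 1) as) (as ! (j - 1)))"

definition jprob :: "nat \<Rightarrow> ('s, 'a) jpolicy \<Rightarrow> 's \<Rightarrow> 'a list \<Rightarrow> real" where
  "jprob N pol s as = cond_prob N pol 0 s as"

definition jactions :: "nat \<Rightarrow> 'a list set" where
  "jactions N = {as. length as = N}"

definition Ppi :: "nat \<Rightarrow> ('s::finite, 'a::finite) mgame \<Rightarrow> ('s, 'a) jpolicy \<Rightarrow> 's \<Rightarrow> 's \<Rightarrow> real" where
  "Ppi N G pol s s' = (\<Sum>as\<in>jactions N. jprob N pol s as * trans G s as s')"

definition rpi :: "nat \<Rightarrow> ('s::finite, 'a::finite) mgame \<Rightarrow> ('s, 'a) jpolicy \<Rightarrow> 's \<Rightarrow> real" where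
  "rpi N G pol s = (\<Sum>as\<in>jactions N. jprob N pol s as * rew G s as)"

fun step_rew :: "nat \<Rightarrow> ('s::finite, 'a::finite) mgame \<Rightarrow> ('s, 'a) jpolicy \<Rightarrow> nat \<Rightarrow> 's \<Rightarrow> real" where
  "step_rew N G pol 0 s = rpi N G pol s"
| "step_rew N G pol (Suc t) s = (\<Sum>s'\<in>UNIV. Ppi N G pol s s' * step_rew N G pol t s')"

definition Vfun :: "nat \<Rightarrow> ('s::finite, 'a::finite) mgame \<Rightarrow> ('s, 'a) jpolicy \<Rightarrow> 's \<Rightarrow> real" where
  "Vfun N G pol s = (\<Sum>t. disc G ^ t * step_rew N G pol t s)"

definition Qfun :: "nat \<Rightarrow> ('s::finite, 'a::finite) mgame \<Rightarrow> ('s, 'a) jpolicy \<Rightarrow> 's \<Rightarrow> 'a list \<Rightarrow> real" where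
  "Qfun N G pol s as = rew G s as + disc G * (\<Sum>s'\<in>UNIV. trans G s as s' * Vfun N G pol s')"

text \<open>Q^{1:k}_pi(s, a^{1:k}) for a prefix pre of length k: expected joint action value when the
remaining agents k+1..N follow pol.\<close>
definition Qpre :: "nat \<Rightarrow> ('s::finite, 'a::finite) mgame \<Rightarrow> ('s, 'a) jpolicy \<Rightarrow> 's \<Rightarrow> 'a list \<Rightarrow> real" where
  "Qpre N G pol s pre =
     (\<Sum>rest\<in>jactions (N - length pre).
        cond_prob N pol (length pre) s (pre @ rest) * Qfun N G pol s (pre @ rest))"

text \<open>Multi-agent advantage A^m_pi(s, a^{1:m-1}, a^m) (m = length pre + 1).\<close>
definition Adv :: "nat \<Rightarrow> ('s::finite, 'a::finite) mgame \<Rightarrow> ('s, 'a) jpolicy \<Rightarrow> 's \<Rightarrow> 'a list \<Rightarrow> 'a \<Rightarrow> real" where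
  "Adv N G pol s pre a = Qpre N G pol s (pre @ [a]) - Qpre N G pol s pre"

definition optimal_jpolicy :: "nat \<Rightarrow> ('s::finite, 'a::finite) mgame \<Rightarrow> ('s, 'a) jpolicy \<Rightarrow> bool" where
  "optimal_jpolicy N G pstar \<longleftrightarrow> is_jpolicy N pstar \<and>
     (\<forall>pol s. is_jpolicy N pol \<longrightarrow> Vfun N G pol s \<le> Vfun N G pstar s)"

definition loglin :: "('s \<Rightarrow> 'a list \<Rightarrow> 'a::finite \<Rightarrow> real^'d) \<Rightarrow> real^'d \<Rightarrow> 's \<Rightarrow> 'a list \<Rightarrow> 'a \<Rightarrow> real" where
  "loglin phi theta s pre a =
     exp (phi s pre a \<bullet> theta) / (\<Sum>b\<in>UNIV. exp (phi s pre b \<bullet> theta))"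

definition loglin_joint :: "('s \<Rightarrow> 'a list \<Rightarrow> 'a::finite \<Rightarrow> real^'d) \<Rightarrow> (nat \<Rightarrow> real^'d) \<Rightarrow> ('s, 'a) jpolicy" where
  "loglin_joint phi theta = (\<lambda>j. loglin phi (theta j))"

definition ideal_update ::
  "nat \<Rightarrow> ('s::finite, 'a::finite) mgame \<Rightarrow> ('s \<Rightarrow> 'a list \<Rightarrow> 'a \<Rightarrow> real^'d) \<Rightarrow> (nat \<Rightarrow> real^'d) \<Rightarrow> real
     \<Rightarrow> nat \<Rightarrow> 's \<Rightarrow> 'a list \<Rightarrow> 'a \<Rightarrow> real" where
  "ideal_update N G phi theta beta m s pre a =
     (let f = (\<lambda>b. exp (Qpre N G (loglin_joint phi theta) s (pre @ [b]) / beta + phi s pre b \<bullet> theta m))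
      in f a / (\<Sum>b\<in>UNIV. f b))"

definition KL :: "('a::finite \<Rightarrow> real) \<Rightarrow> ('a \<Rightarrow> real) \<Rightarrow> real" where
  "KL p q = (\<Sum>a\<in>UNIV. if p a = 0 then 0 else p a * ln (p a / q a))"

definition ip :: "('a::finite \<Rightarrow> real) \<Rightarrow> ('a \<Rightarrow> real) \<Rightarrow> real" where
  "ip f g = (\<Sum>a\<in>UNIV. f a * g a)"

definition norm1 :: "('a::finite \<Rightarrow> real) \<Rightarrow> real" where
  "norm1 f = (\<Sum>a\<in>UNIV. \<bar>f a\<bar>)"

end

theory Submission
  imports Defs
begin

(*
  For p >= 0 and strictly positive q, q' the three-point identity
    KL(p||q') - KL(p||q) + KL(q'||q) = <ln q' - ln q, q' - p>
  holds.  The current, next and ideal policies q, q', r are softmax distributions,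
  so ln q' - ln q and ln r - ln q are logit differences up to additive constants,
  and constants vanish against differences of distributions.  Splitting
  q' - p = (q - p) + (q' - q) turns the right-hand side exactly into the four inner
  products of the bound, and Pinsker's inequality KL(q'||q) >= 1/2 ||q' - q||_1^2
  finishes the proof.
*)

definition softmax :: "('a::finite \<Rightarrow> real) \<Rightarrow> 'a \<Rightarrow> real" where
  "softmax f a = exp (f a) / (\<Sum>b\<in>UNIV. exp (f b))"

lemma softmax_pos: "0 < softmax f a"
  unfolding softmax_def by (intro divide_pos_pos sum_pos) auto

lemma sum_softmax: "(\<Sum>a\<in>UNIV. softmax f a) = 1"
proof -
  have "0 < (\<Sum>b\<in>UNIV. exp (f b))" by (intro sum_pos) auto
  then show ?thesis by (simp add: softmax_def sum_divide_distrib[symmetric])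
qed

lemma ln_softmax_diff:
  obtains c where "\<And>a. ln (softmax f a) - ln (softmax g a) = f a - g a + c"
proof
  have "0 < (\<Sum>b\<in>UNIV. exp (f b))" "0 < (\<Sum>b\<in>UNIV. exp (g b))"
    by (intro sum_pos; simp)+
  then show "ln (softmax f a) - ln (softmax g a)
      = f a - g a + (ln (\<Sum>b\<in>UNIV. exp (g b)) - ln (\<Sum>b\<in>UNIV. exp (f b)))" for a
    by (simp add: softmax_def ln_div)
qed

lemma KL_eq_sum: "KL p q = (\<Sum>a\<in>UNIV. p a * ln (p a / q a))"
  unfolding KL_def by (rule sum.cong) auto

lemma KL_eq_sum_ln_diff:
  assumes "\<And>a. 0 \<le> p a" and "\<And>a. 0 < q a"
  shows "KL p q = (\<Sum>a\<in>UNIV. p a * (ln (p a) - ln (q a)))"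
  unfolding KL_eq_sum
proof (rule sum.cong)
  fix a
  show "p a * ln (p a / q a) = p a * (ln (p a) - ln (q a))"
    using assms[of a] by (cases "p a = 0") (auto simp: ln_div)
qed simp

lemma KL_three_point:
  assumes "\<And>a. 0 \<le> p a" and "\<And>a. 0 < q a" and "\<And>a. 0 < q' a"
  shows "KL p q' - KL p q + KL q' q = ip (\<lambda>a. ln (q' a) - ln (q a)) (\<lambda>a. q' a - p a)"
proof -
  have "\<And>a. 0 \<le> q' a" using assms(3) less_imp_le by blast
  then show ?thesis
    using assms by (simp add: KL_eq_sum_ln_diff ip_def algebra_simps flip: sum_subtractf sum.distrib)
qed

lemma mono_on_succ_mult_ln_minus_twice_pred: "mono_on {0<..} (\<lambda>x::real. (x + 1) * ln x - 2 * (x - 1))"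
proof (rule mono_onI)
  fix a b :: real
  assume "a \<in> {0<..}" and "a \<le> b"
  show "(a + 1) * ln a - 2 * (a - 1) \<le> (b + 1) * ln b - 2 * (b - 1)"
  proof (rule deriv_nonneg_imp_mono[where g = "\<lambda>x. (x + 1) * ln x - 2 * (x - 1)"
        and g' = "\<lambda>x. ln x + (x + 1) / x - 2"])
    fix x assume "x \<in> {a..b}"
    with \<open>a \<in> {0<..}\<close> have "0 < x" by auto
    then show "((\<lambda>x. (x + 1) * ln x - 2 * (x - 1)) has_real_derivative ln x + (x + 1) / x - 2) (at x)"
      by (auto intro!: derivative_eq_intros simp: field_simps)
    have "ln (1 / x) \<le> 1 / x - 1" using \<open>0 < x\<close> by (intro ln_le_minus_one) simp
    moreover have "(x + 1) / x = 1 + 1 / x" using \<open>0 < x\<close> by (simp add: field_simps)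
    ultimately show "0 \<le> ln x + (x + 1) / x - 2" using \<open>0 < x\<close> by (simp add: ln_div)
  qed (use \<open>a \<le> b\<close> in auto)
qed

text \<open>For \<open>x = p / q\<close> this reads \<open>(p - q)\<^sup>2 \<le> (2p + 4q)/3 \<cdot> (p ln(p/q) - p + q)\<close>; summed over
  the actions with Cauchy-Schwarz it yields Pinsker's inequality.\<close>

lemma pinsker_scalar:
  fixes x :: real
  assumes "0 \<le> x"
  shows "3 * (x - 1)\<^sup>2 \<le> (2 * x + 4) * (x * ln x - x + 1)"
proof (cases "x = 0")
  case False
  with assms have "0 < x" by simp
  define g where "g y = (2 * y + 4) * (y * ln y - y + 1) - 3 * (y - 1)\<^sup>2" for y :: real
  define h where "h y = (y + 1) * ln y - 2 * (y - 1)" for y :: real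
  have g_deriv: "(g has_real_derivative 4 * h y) (at y)" if "0 < y" for y
    unfolding g_def h_def using that
    by (auto intro!: derivative_eq_intros simp: field_simps power2_eq_square)
  have h_nonneg: "0 \<le> h y" if "1 \<le> y" for y
    using mono_onD[OF mono_on_succ_mult_ln_minus_twice_pred, of 1 y] that by (simp add: h_def)
  have h_nonpos: "h y \<le> 0" if "0 < y" "y \<le> 1" for y
    using mono_onD[OF mono_on_succ_mult_ln_minus_twice_pred, of y 1] that by (simp add: h_def)
  have "g 1 \<le> g x"
  proof (cases "1 \<le> x")
    case True
    then show ?thesis
      by (intro deriv_nonneg_imp_mono[OF g_deriv]) (auto intro: h_nonneg)
  next
    case False
    with \<open>0 < x\<close> show ?thesis
      by (intro deriv_nonpos_imp_antimono[OF g_deriv]) (auto intro: h_nonpos)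
  qed
  then show ?thesis by (simp add: g_def)
qed simp

lemma sum_abs_squared_le_mult_sums:
  fixes f u v :: "'i \<Rightarrow> real"
  assumes "\<And>i. i \<in> I \<Longrightarrow> 0 \<le> u i" and "\<And>i. i \<in> I \<Longrightarrow> 0 \<le> v i"
    and "\<And>i. i \<in> I \<Longrightarrow> (f i)\<^sup>2 \<le> u i * v i"
  shows "(\<Sum>i\<in>I. \<bar>f i\<bar>)\<^sup>2 \<le> (\<Sum>i\<in>I. u i) * (\<Sum>i\<in>I. v i)"
proof -
  have "\<bar>f i\<bar> \<le> sqrt (u i) * sqrt (v i)" if "i \<in> I" for i
    using assms[OF that] by (metis real_sqrt_abs real_sqrt_le_mono real_sqrt_mult)
  then have "(\<Sum>i\<in>I. \<bar>f i\<bar>)\<^sup>2 \<le> (\<Sum>i\<in>I. sqrt (u i) * sqrt (v i))\<^sup>2"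
    by (intro power_mono sum_mono sum_nonneg) auto
  also have "\<dots> \<le> (\<Sum>i\<in>I. (sqrt (u i))\<^sup>2) * (\<Sum>i\<in>I. (sqrt (v i))\<^sup>2)"
    by (rule Cauchy_Schwarz_ineq_sum)
  also have "\<dots> = (\<Sum>i\<in>I. u i) * (\<Sum>i\<in>I. v i)"
    using assms by (simp cong: sum.cong)
  finally show ?thesis .
qed

lemma pinsker_inequality:
  assumes "is_dist p" and "\<And>a. 0 < q a" and "(\<Sum>a\<in>UNIV. q a) = 1"
  shows "(norm1 (\<lambda>a. p a - q a))\<^sup>2 \<le> 2 * KL p q"
proof -
  have p_nonneg: "\<And>a. 0 \<le> p a" and p_sum: "(\<Sum>a\<in>UNIV. p a) = 1"
    using \<open>is_dist p\<close> by (auto simp: is_dist_def)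
  define u where "u a = (2 * p a + 4 * q a) / 3" for a
  define v where "v a = p a * ln (p a / q a) - p a + q a" for a
  have bound: "(p a - q a)\<^sup>2 \<le> u a * v a \<and> 0 \<le> v a" for a
  proof -
    define x where "x = p a / q a"
    have "0 \<le> x" using p_nonneg[of a] assms(2)[of a] by (simp add: x_def)
    have pa: "p a = x * q a" using assms(2)[of a] by (simp add: x_def)
    have scalar: "3 * (x - 1)\<^sup>2 \<le> (2 * x + 4) * (x * ln x - x + 1)"
      using \<open>0 \<le> x\<close> by (rule pinsker_scalar)
    have v_eq: "v a = q a * (x * ln x - x + 1)"
      by (simp add: v_def x_def[symmetric] pa algebra_simps)
    have "(p a - q a)\<^sup>2 = (q a)\<^sup>2 * (3 * (x - 1)\<^sup>2) / 3"
      by (simp add: pa power2_eq_square algebra_simps)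
    also have "\<dots> \<le> (q a)\<^sup>2 * ((2 * x + 4) * (x * ln x - x + 1)) / 3"
      using scalar by (intro divide_right_mono mult_left_mono) auto
    also have "\<dots> = u a * v a"
      unfolding v_eq u_def pa by (simp add: power2_eq_square algebra_simps)
    finally have "(p a - q a)\<^sup>2 \<le> u a * v a" .
    moreover have "0 \<le> x * ln x - x + 1"
      using scalar \<open>0 \<le> x\<close> by (smt (verit) zero_le_mult_iff zero_le_power2)
    ultimately show ?thesis
      using assms(2)[of a] by (simp add: v_eq)
  qed
  have "(norm1 (\<lambda>a. p a - q a))\<^sup>2 \<le> (\<Sum>a\<in>UNIV. u a) * (\<Sum>a\<in>UNIV. v a)"
    unfolding norm1_def using bound p_nonneg assms(2)
    by (intro sum_abs_squared_le_mult_sums) (auto simp: u_def less_imp_le)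
  also have "(\<Sum>a\<in>UNIV. u a) = 2"
    using p_sum assms(3) by (simp add: u_def sum_divide_distrib[symmetric] sum.distrib sum_distrib_left[symmetric])
  also have "(\<Sum>a\<in>UNIV. v a) = KL p q"
    using p_sum assms(3) by (simp add: v_def KL_eq_sum sum.distrib sum_subtractf)
  finally show ?thesis .
qed

lemma softmax_mirror_step_bound:
  fixes p u v Q :: "'a::finite \<Rightarrow> real" and beta C :: real
  assumes "is_dist p"
  defines "q \<equiv> softmax u" and "q' \<equiv> softmax v" and "r \<equiv> softmax (\<lambda>a. Q a / beta + u a)"
  shows "KL p q' - KL p q
    \<le> ip (\<lambda>a. ln (q' a / r a)) (\<lambda>a. q a - p a) + (1 / beta) * ip (\<lambda>a. Q a - C) (\<lambda>a. q a - p a)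
      - (1 / 2) * (norm1 (\<lambda>a. q' a - q a))\<^sup>2 - ip (\<lambda>a. v a - u a) (\<lambda>a. q a - q' a)"
proof -
  have p_nonneg: "\<And>a. 0 \<le> p a" and p_sum: "(\<Sum>a\<in>UNIV. p a) = 1"
    using \<open>is_dist p\<close> by (auto simp: is_dist_def)
  have pos: "\<And>a. 0 < q a" "\<And>a. 0 < q' a" "\<And>a. 0 < r a"
    and sums: "(\<Sum>a\<in>UNIV. q a) = 1" "(\<Sum>a\<in>UNIV. q' a) = 1"
    by (simp_all add: q_def q'_def r_def softmax_pos sum_softmax)
  obtain c1 where c1: "\<And>a. ln (q' a) - ln (q a) = v a - u a + c1"
    unfolding q_def q'_def using ln_softmax_diff by blast
  obtain c2 where c2: "\<And>a. ln (r a) - ln (q a) = Q a / beta + c2"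
  proof -
    obtain c where "\<And>a. ln (r a) - ln (q a) = (Q a / beta + u a) - u a + c"
      unfolding q_def r_def using ln_softmax_diff by blast
    then show thesis using that by simp
  qed
  \<comment> \<open>the log-partition constants pair only with differences of distributions, which sum to zero\<close>
  have pointwise: "(ln (q' a) - ln (q a)) * (q' a - p a)
      = ln (q' a / r a) * (q a - p a) + (1 / beta) * ((Q a - C) * (q a - p a))
        - (v a - u a) * (q a - q' a) + c1 * (q' a - q a) + (c2 + C / beta) * (q a - p a)" for a
  proof -
    have ln_ratio: "ln (q' a / r a) = v a - u a + c1 - Q a / beta - c2"
      using c1[of a] c2[of a] pos[of a] by (simp add: ln_div)
    show ?thesis
      unfolding c1 ln_ratio by (simp add: algebra_simps diff_divide_distrib)
  qed
  have "ip (\<lambda>a. ln (q' a) - ln (q a)) (\<lambda>a. q' a - p a)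
      = ip (\<lambda>a. ln (q' a / r a)) (\<lambda>a. q a - p a) + (1 / beta) * ip (\<lambda>a. Q a - C) (\<lambda>a. q a - p a)
        - ip (\<lambda>a. v a - u a) (\<lambda>a. q a - q' a)"
    unfolding ip_def pointwise using p_sum sums
    by (simp add: sum.distrib sum_subtractf sum_distrib_left[symmetric] sum_divide_distrib[symmetric])
  moreover have "KL p q' - KL p q + KL q' q = ip (\<lambda>a. ln (q' a) - ln (q a)) (\<lambda>a. q' a - p a)"
    using p_nonneg pos(1,2) by (rule KL_three_point)
  moreover have "(norm1 (\<lambda>a. q' a - q a))\<^sup>2 \<le> 2 * KL q' q"
    using pos sums by (intro pinsker_inequality) (auto simp: is_dist_def less_imp_le)
  ultimately show ?thesis by linarith
qed

lemma loglin_eq_softmax: "loglin phi theta s pre = softmax (\<lambda>a. phi s pre a \<bullet> theta)"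
  by (simp add: fun_eq_iff loglin_def softmax_def)

lemma ideal_update_eq_softmax:
  "ideal_update N G phi theta beta m s pre
    = softmax (\<lambda>a. Qpre N G (loglin_joint phi theta) s (pre @ [a]) / beta + phi s pre a \<bullet> theta m)"
  by (simp add: fun_eq_iff ideal_update_def softmax_def)

theorem lemma7:
  fixes N m :: nat
    and G :: "('s::finite, 'a::finite) mgame"
    and phi :: "'s \<Rightarrow> 'a list \<Rightarrow> 'a \<Rightarrow> real^'d::finite"
    and theta_k :: "nat \<Rightarrow> real^'d"
    and theta_next :: "real^'d"
    and beta :: real
    and pstar :: "('s, 'a) jpolicy"
    and s :: 's and pre :: "'a list"
  assumes "valid_game N G"
    and "1 \<le> m" and "m \<le> N"
    and "beta > 0"
    and "optimal_jpolicy N G pstar"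
    and "length pre = m - 1"
  shows
    "KL (pstar m s pre) (loglin phi theta_next s pre) - KL (pstar m s pre) (loglin phi (theta_k m) s pre)
     \<le> ip (\<lambda>a. ln (loglin phi theta_next s pre a / ideal_update N G phi theta_k beta m s pre a))
           (\<lambda>a. loglin phi (theta_k m) s pre a - pstar m s pre a)
       + (1 / beta) * ip (Adv N G (loglin_joint phi theta_k) s pre)
           (\<lambda>a. loglin phi (theta_k m) s pre a - pstar m s pre a)
       - (1 / 2) * (norm1 (\<lambda>a. loglin phi theta_next s pre a - loglin phi (theta_k m) s pre a))\<^sup>2
       - ip (\<lambda>a. (theta_next - theta_k m) \<bullet> phi s pre a)
           (\<lambda>a. loglin phi (theta_k m) s pre a - loglin phi theta_next s pre a)"
proof -
  have "is_dist (pstar m s pre)"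
    using assms(2,3,5,6) by (simp add: optimal_jpolicy_def is_jpolicy_def)
  from softmax_mirror_step_bound[OF this,
      where u = "\<lambda>a. phi s pre a \<bullet> theta_k m" and v = "\<lambda>a. phi s pre a \<bullet> theta_next"
        and Q = "\<lambda>a. Qpre N G (loglin_joint phi theta_k) s (pre @ [a])"
        and C = "Qpre N G (loglin_joint phi theta_k) s pre" and beta = beta]
  show ?thesis
    by (simp add: loglin_eq_softmax ideal_update_eq_softmax Adv_def[abs_def] inner_diff_left inner_commute)
qed

end
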